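(* For every $m\ge1$, $\theta_m=\mathrm{tr}_{1,\dots,m}\,\overline{\mathcal M}_m$, where $$\overline{\mathcal M}_m=(\mathcal L_m)^{\rightarrow}\big(\mathcal T_{m-1\,m}+P_{m-1\,m}(\mathcal L_{m-1})^{\rightarrow}\big)\cdots\big(\mathcal T_{12}+P_{12}(\mathcal L_1)^{\rightarrow}\big)\,1,$$ the operators being applied consecutively from right to left with $(\mathcal T_{a\,a+1}+P_{a\,a+1}(\mathcal L_a)^{\rightarrow})X:=\mathcal T_{a\,a+1}X+P_{a\,a+1}X\mathcal L_a$ and $(\mathcal L_m)^{\rightarrow}X:=X\mathcal L_m$, and the trace taken over all $m$ copies of $\mathrm{End}\,\mathbb C^N$.
   Context: $E_{ij}$ is the standard basis of $\mathfrak{gl}_N$, $e_{ij}$ matrix units; $E_{ij}[r]=E_{ij}t^r$ in the loop algebra; $\widehat{\mathfrak g}^{+}=\mathfrak b^+\oplus t^{-1}\mathfrak{gl}_N[t^{-1}]$ with $\mathfrak b^+$ spanned by $E_{ij}$, $i\le j$; $\mathrm{sgn}(0)=0$. $\mathcal L^+(u)=\sum_{i,j}e_{ij}\otimes\mathcal L^+_{ij}(u)$, $\mathcal L^+_{ij}(u)=\sum_{n\ge0}\mathcal L^+_{ij}[-n]u^n$, $\mathcal L^+_{ij}[-n]=-2E_{ij}[-n]$ ($n\ge1$), $\mathcal L^+_{ij}[0]=-(1+\mathrm{sgn}(j-i))E_{ij}$. In $\mathrm U(\widehat{\mathfrak g}^{+})[[u,\partial_u]]$, $\partial_u$ commutes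 with $\mathrm U(\widehat{\mathfrak g}^{+})$ and $\partial_ug(u)=g(u)\partial_u+g'(u)$. $\mathcal L=2u\partial_u\cdot I-\mathcal L^+(u)$. $P=\sum_{i,j}e_{ij}\otimes e_{ji}$, $\mathcal T=\sum_{i,j}\mathrm{sgn}(j-i)e_{ij}\otimes e_{ji}$; subscripts denote tensor copies of $\mathrm{End}\,\mathbb C^N$. $T(y)=\sum_i e_{ii}\otimes e_{ii}+\frac1{1-y}\sum_{i<j}e_{ij}\otimes e_{ji}+\frac1{1+y}\sum_{i>j}e_{ij}\otimes e_{ji}$ as a power series in $y$, and $\theta_m$ is defined by $\sum_{m\ge1}\theta_my^m=\sum_{s\ge1}y^s\,\mathrm{tr}_{1,\dots,s}T_{s-1\,s}(y)\cdots T_{12}(y)\mathcal L_1\cdots\mathcal L_s$. *)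

theory Defs
  imports Complex_Main "HOL-Computational_Algebra.Formal_Power_Series"
begin

(* Elements of  End(C^N)^{\<otimes> m} \<otimes> A  (A an associative unital ring) are represented by
   their matrix entries X I J, where I = [i_1,...,i_m], J = [j_1,...,j_m] are multi-indices
   with entries in {0..<N}; X = sum over I J of e_{i_1 j_1} \<otimes> ... \<otimes> e_{i_m j_m} \<otimes> X I J.
   Tensor copies are numbered 1..m (copy a is list position a-1). *)

type_synonym 'a tmat = "nat list \<Rightarrow> nat list \<Rightarrow> 'a"

definition idxs :: "nat \<Rightarrow> nat \<Rightarrow> nat list set" where
  "idxs N m = {xs. length xs = m \<and> set xs \<subseteq> {..<N}}"

definition tmul :: "nat \<Rightarrow> nat \<Rightarrow> 'a::semiring_0 tmat \<Rightarrow> 'a tmat \<Rightarrow> 'a tmat" where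
  "tmul N m X Y = (\<lambda>I J. \<Sum>K\<in>idxs N m. X I K * Y K J)"

definition tadd :: "'a::plus tmat \<Rightarrow> 'a tmat \<Rightarrow> 'a tmat" where
  "tadd X Y = (\<lambda>I J. X I J + Y I J)"

definition tone :: "'a::{zero,one} tmat" where
  "tone = (\<lambda>I J. if I = J then 1 else 0)"

definition ttr :: "nat \<Rightarrow> nat \<Rightarrow> 'a::comm_monoid_add tmat \<Rightarrow> 'a" where
  "ttr N m X = (\<Sum>I\<in>idxs N m. X I I)"

definition tprods :: "nat \<Rightarrow> nat \<Rightarrow> 'a::semiring_1 tmat list \<Rightarrow> 'a tmat" where
  "tprods N m Xs = foldr (tmul N m) Xs tone"

(* A_a : the N x N matrix A = sum e_ij \<otimes> A i j placed in tensor copy a (of m copies) *)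
definition emb1 :: "nat \<Rightarrow> nat \<Rightarrow> (nat \<Rightarrow> nat \<Rightarrow> 'a::zero) \<Rightarrow> 'a tmat" where
  "emb1 m a A = (\<lambda>I J. if (\<forall>c<m. c \<noteq> a - 1 \<longrightarrow> I ! c = J ! c)
                       then A (I ! (a - 1)) (J ! (a - 1)) else 0)"

(* R_{ab} : R = sum R i j k l  e_ij \<otimes> e_kl  placed in tensor copies a and b *)
definition emb2 :: "nat \<Rightarrow> nat \<Rightarrow> nat \<Rightarrow> (nat \<Rightarrow> nat \<Rightarrow> nat \<Rightarrow> nat \<Rightarrow> 'a::zero) \<Rightarrow> 'a tmat" where
  "emb2 m a b R = (\<lambda>I J. if (\<forall>c<m. c \<noteq> a - 1 \<and> c \<noteq> b - 1 \<longrightarrow> I ! c = J ! c)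
                   then R (I ! (a - 1)) (J ! (a - 1)) (I ! (b - 1)) (J ! (b - 1)) else 0)"

definition Pop :: "nat \<Rightarrow> nat \<Rightarrow> nat \<Rightarrow> nat \<Rightarrow> 'a::{zero,one}" where
  "Pop i j k l = (if k = j \<and> l = i then 1 else 0)"

definition Tcal :: "nat \<Rightarrow> nat \<Rightarrow> nat \<Rightarrow> nat \<Rightarrow> 'a::ring_1" where
  "Tcal i j k l = (if k = j \<and> l = i then of_int (sgn (int j - int i)) else 0)"

(* T(y) = sum_i e_ii \<otimes> e_ii + 1/(1-y) sum_{i<j} e_ij \<otimes> e_ji + 1/(1+y) sum_{i>j} e_ij \<otimes> e_ji,
   as formal power series in y = fps_X;
   1/(1-y) = sum_n y^n and 1/(1+y) = sum_n (-1)^n y^n *)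
definition Tser :: "nat \<Rightarrow> nat \<Rightarrow> nat \<Rightarrow> nat \<Rightarrow> 'a::ring_1 fps" where
  "Tser i j k l = (if k = j \<and> l = i then
                     (if i = j then 1
                      else if i < j then Abs_fps (\<lambda>n. 1)
                      else Abs_fps (\<lambda>n. (-1) ^ n))
                   else 0)"

definition theta_term :: "nat \<Rightarrow> (nat \<Rightarrow> nat \<Rightarrow> 'a::ring_1) \<Rightarrow> nat \<Rightarrow> 'a fps" where
  "theta_term N L s = ttr N s (tprods N s
      (map (\<lambda>a. emb2 s a (a + 1) Tser) (rev [1..<s])
       @ map (\<lambda>a. emb1 s a (\<lambda>i j. fps_const (L i j))) [1..<s + 1]))"

(* theta_m = coefficient of y^m in sum_{s>=1} y^s theta_term s; only s <= m contribute *)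
definition theta :: "nat \<Rightarrow> (nat \<Rightarrow> nat \<Rightarrow> 'a::ring_1) \<Rightarrow> nat \<Rightarrow> 'a" where
  "theta N L m = fps_nth (\<Sum>s = 1..m. fps_X ^ s * theta_term N L s) m"

definition Mstep :: "nat \<Rightarrow> (nat \<Rightarrow> nat \<Rightarrow> 'a::ring_1) \<Rightarrow> nat \<Rightarrow> nat \<Rightarrow> 'a tmat \<Rightarrow> 'a tmat" where
  "Mstep N L m a X = tadd (tmul N m (emb2 m a (a + 1) Tcal) X)
                          (tmul N m (tmul N m (emb2 m a (a + 1) Pop) X) (emb1 m a L))"

definition Mbar :: "nat \<Rightarrow> (nat \<Rightarrow> nat \<Rightarrow> 'a::ring_1) \<Rightarrow> nat \<Rightarrow> 'a tmat" where
  "Mbar N L m = tmul N m (fold (Mstep N L m) [1..<m] tone) (emb1 m m L)"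

end

theory Submission
  imports Defs
begin

(* Both traces are sums over multi-indices I of diagonal entries, and both diagonal entries are
   weights of the closed path  last I -> I!0 -> ... -> I!(m-1) = last I.  Put v = last I,
   d_v x = sgn (v - x), D_v = diag d_v and G_v = (1 - y D_v)^-1.  The chain T_{s-1 s}(y)...T_{12}(y)
   only carries the last index to the front, at the cost of the diagonal factors 1/(1 - d_v(x) y),
   so the s-th summand of the generating series of theta is  sum_v ((G_v L)^s)_{vv}.  Each step
   T_{a a+1} X + P_{a a+1} X L_a performs the same transposition, the sign of T contributing a
   diagonal term, so that  tr Mbar_m = sum_v ((L + D_v)^m)_{vv}.  The two agree because
   (1 - y (L + D_v))^-1 = (1 - y G_v L)^-1 G_v  and G_v is trivial in column v, as d_v v = 0. *)

section \<open>Multi-indices and operators on tensor copies\<close>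

lemma finite_idxs: "finite (idxs N n)"
proof -
  have "idxs N n = {xs. set xs \<subseteq> {..<N} \<and> length xs = n}" by (auto simp: idxs_def)
  thus ?thesis using finite_lists_length_eq[of "{..<N}" n] by simp
qed

lemma idxs_Suc: "idxs N (Suc n) = (\<lambda>(x, xs). x # xs) ` ({..<N} \<times> idxs N n)"
proof
  show "idxs N (Suc n) \<subseteq> (\<lambda>(x, xs). x # xs) ` ({..<N} \<times> idxs N n)"
  proof
    fix ys assume "ys \<in> idxs N (Suc n)"
    then obtain x xs where "ys = x # xs" "x < N" "xs \<in> idxs N n"
      by (cases ys) (auto simp: idxs_def)
    thus "ys \<in> (\<lambda>(x, xs). x # xs) ` ({..<N} \<times> idxs N n)" by force
  qed
qed (auto simp: idxs_def)

lemma length_idxs: "I \<in> idxs N m \<Longrightarrow> length I = m"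
  by (simp add: idxs_def)

lemma nth_idxs_less: "I \<in> idxs N m \<Longrightarrow> b < m \<Longrightarrow> I ! b < N"
  unfolding idxs_def using nth_mem by fastforce

lemma list_update_idxs: "I \<in> idxs N m \<Longrightarrow> x < N \<Longrightarrow> I[p := x] \<in> idxs N m"
  by (auto simp: idxs_def dest: subsetD[OF set_update_subset_insert])

lemma sum_idxs_agree_off:
  assumes I: "I \<in> idxs N m" and p: "p < m"
  shows "(\<Sum>K\<in>idxs N m. if \<forall>c<m. c \<noteq> p \<longrightarrow> I ! c = K ! c then f K else 0)
         = (\<Sum>x<N. f (I[p := x]))"
proof -
  have fibre: "{K\<in>idxs N m. \<forall>c<m. c \<noteq> p \<longrightarrow> I ! c = K ! c} = (\<lambda>x. I[p := x]) ` {..<N}"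
  proof (intro equalityI subsetI)
    fix K assume "K \<in> {K\<in>idxs N m. \<forall>c<m. c \<noteq> p \<longrightarrow> I ! c = K ! c}"
    hence K: "K \<in> idxs N m" and agree: "\<forall>c<m. c \<noteq> p \<longrightarrow> I ! c = K ! c" by auto
    have "K = I[p := K ! p]"
      using agree p length_idxs[OF I] length_idxs[OF K]
      by (intro nth_equalityI) (auto simp: nth_list_update)
    moreover have "K ! p < N" using K p by (rule nth_idxs_less)
    ultimately show "K \<in> (\<lambda>x. I[p := x]) ` {..<N}" by blast
  qed (use I list_update_idxs[OF I] in auto)
  have "inj_on (\<lambda>x. I[p := x]) {..<N}"
    using p length_idxs[OF I] by (intro inj_onI) (metis nth_list_update_eq)
  hence "(\<Sum>x<N. f (I[p := x])) = sum f ((\<lambda>x. I[p := x]) ` {..<N})"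
    by (simp add: sum.reindex)
  also have "\<dots> = (\<Sum>K\<in>idxs N m. if \<forall>c<m. c \<noteq> p \<longrightarrow> I ! c = K ! c then f K else 0)"
    by (simp add: fibre[symmetric] sum.inter_filter finite_idxs)
  finally show ?thesis ..
qed

lemma tmul_emb1_left:
  assumes "I \<in> idxs N m" and "Suc p \<le> m"
  shows "tmul N m (emb1 m (Suc p) A) Y I J = (\<Sum>x<N. A (I ! p) x * Y (I[p := x]) J)"
proof -
  have "tmul N m (emb1 m (Suc p) A) Y I J
      = (\<Sum>K\<in>idxs N m. if \<forall>c<m. c \<noteq> p \<longrightarrow> I ! c = K ! c then A (I ! p) (K ! p) * Y K J else 0)"
    unfolding tmul_def emb1_def by (intro sum.cong) auto
  also have "\<dots> = (\<Sum>x<N. A (I ! p) (I[p := x] ! p) * Y (I[p := x]) J)"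
    using assms by (intro sum_idxs_agree_off) auto
  finally show ?thesis
    using assms by (simp add: length_idxs)
qed

lemma tmul_emb1_right:
  assumes "J \<in> idxs N m" and "Suc p \<le> m"
  shows "tmul N m Y (emb1 m (Suc p) A) I J = (\<Sum>x<N. Y I (J[p := x]) * A x (J ! p))"
proof -
  have "tmul N m Y (emb1 m (Suc p) A) I J
      = (\<Sum>K\<in>idxs N m. if \<forall>c<m. c \<noteq> p \<longrightarrow> J ! c = K ! c then Y I K * A (K ! p) (J ! p) else 0)"
    unfolding tmul_def emb1_def by (intro sum.cong) auto
  also have "\<dots> = (\<Sum>x<N. Y I (J[p := x]) * A (J[p := x] ! p) (J ! p))"
    using assms by (intro sum_idxs_agree_off) auto
  finally show ?thesis
    using assms by (simp add: length_idxs)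
qed

definition swap_adj :: "nat \<Rightarrow> 'b list \<Rightarrow> 'b list" where
  "swap_adj p I = I[p := I ! Suc p, Suc p := I ! p]"

lemma swap_adj_idxs: "I \<in> idxs N m \<Longrightarrow> Suc p < m \<Longrightarrow> swap_adj p I \<in> idxs N m"
  unfolding swap_adj_def by (intro list_update_idxs) (auto simp: nth_idxs_less)

lemma length_swap_adj [simp]: "length (swap_adj p I) = length I"
  by (simp add: swap_adj_def)

lemma nth_swap_adj:
  "Suc p < length I \<Longrightarrow>
   swap_adj p I ! c = (if c = p then I ! Suc p else if c = Suc p then I ! p else I ! c)"
  by (simp add: swap_adj_def nth_list_update)

lemma eq_swap_adj_iff:
  assumes "length K = m" "length I = m" "Suc p < m"
  shows "K = swap_adj p I \<longleftrightarrow>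
    (\<forall>c<m. c \<noteq> p \<and> c \<noteq> Suc p \<longrightarrow> I ! c = K ! c) \<and> K ! p = I ! Suc p \<and> K ! Suc p = I ! p"
proof
  assume agree: "(\<forall>c<m. c \<noteq> p \<and> c \<noteq> Suc p \<longrightarrow> I ! c = K ! c) \<and> K ! p = I ! Suc p \<and> K ! Suc p = I ! p"
  show "K = swap_adj p I"
    by (rule nth_equalityI) (use assms agree in \<open>simp_all add: nth_swap_adj\<close>)
qed (use assms in \<open>simp add: nth_swap_adj\<close>)

text \<open>The hypothesis on \<open>R\<close> says \<open>R = \<Sum> r\<^sub>i\<^sub>j e\<^sub>i\<^sub>j \<otimes> e\<^sub>j\<^sub>i\<close>, as for \<open>P\<close>, \<open>\<T>\<close> and \<open>T(y)\<close>.\<close>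

lemma emb2_swap_entry:
  assumes I: "I \<in> idxs N m" and K: "K \<in> idxs N m" and p: "Suc p < m"
    and R: "\<And>i j k l. k \<noteq> j \<or> l \<noteq> i \<Longrightarrow> R i j k l = 0"
  shows "emb2 m (Suc p) (Suc p + 1) R I K
       = (if K = swap_adj p I then R (I ! p) (I ! Suc p) (I ! Suc p) (I ! p) else 0)"
proof -
  have e: "emb2 m (Suc p) (Suc p + 1) R I K
      = (if \<forall>c<m. c \<noteq> p \<and> c \<noteq> Suc p \<longrightarrow> I ! c = K ! c then R (I ! p) (K ! p) (I ! Suc p) (K ! Suc p) else 0)"
    unfolding emb2_def by (simp only: diff_Suc_1 add_diff_cancel_right')
  show ?thesis
    unfolding e eq_swap_adj_iff[OF length_idxs[OF K] length_idxs[OF I] p]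
    by (cases "\<forall>c<m. c \<noteq> p \<and> c \<noteq> Suc p \<longrightarrow> I ! c = K ! c") (auto intro: R)
qed

lemma tmul_emb2_swap_left:
  assumes I: "I \<in> idxs N m" and p: "Suc p < m"
    and R: "\<And>i j k l. k \<noteq> j \<or> l \<noteq> i \<Longrightarrow> R i j k l = 0"
  shows "tmul N m (emb2 m (Suc p) (Suc p + 1) R) Y I J
       = R (I ! p) (I ! Suc p) (I ! Suc p) (I ! p) * Y (swap_adj p I) J"
proof -
  let ?c = "R (I ! p) (I ! Suc p) (I ! Suc p) (I ! p)"
  have "tmul N m (emb2 m (Suc p) (Suc p + 1) R) Y I J
      = (\<Sum>K\<in>idxs N m. if swap_adj p I = K then ?c * Y K J else 0)"
    unfolding tmul_def by (intro sum.cong refl) (use emb2_swap_entry[OF I _ p R] in auto)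
  also have "\<dots> = ?c * Y (swap_adj p I) J"
    using swap_adj_idxs[OF I p] by (simp add: finite_idxs)
  finally show ?thesis .
qed

definition rotate_to_front :: "nat \<Rightarrow> 'b list \<Rightarrow> 'b list" where
  "rotate_to_front k I = I ! k # take k I @ drop (Suc k) I"

lemma nth_rotate_to_front: "b \<le> k \<Longrightarrow> k < length I \<Longrightarrow> rotate_to_front k I ! b = (I ! k # I) ! b"
  by (cases b) (auto simp: rotate_to_front_def nth_append)

lemma rotate_to_front_0: "I \<noteq> [] \<Longrightarrow> rotate_to_front 0 I = I"
  by (cases I) (auto simp: rotate_to_front_def)

lemma rotate_to_front_swap_adj:
  "Suc k < length I \<Longrightarrow> rotate_to_front k (swap_adj k I) = rotate_to_front (Suc k) I"
  unfolding rotate_to_front_def swap_adj_def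
  by (intro nth_equalityI)
     (auto simp: nth_append nth_list_update min_def nth_Cons' take_Suc_conv_app_nth
           intro!: arg_cong[where f="(!) I"])

lemma rotate_to_front_idxs:
  assumes "I \<in> idxs N m" "k < m"
  shows "rotate_to_front k I \<in> idxs N m"
proof -
  have "I ! k < N" using assms by (rule nth_idxs_less)
  thus ?thesis using assms
    by (auto simp: rotate_to_front_def idxs_def dest: in_set_takeD in_set_dropD)
qed

lemma foldr_tmul_emb2_swaps:
  assumes "I \<in> idxs N m" and "k < m"
    and R: "\<And>i j k l. k \<noteq> j \<or> l \<noteq> i \<Longrightarrow> R i j k l = 0"
  shows "foldr (tmul N m) (map (\<lambda>a. emb2 m a (a + 1) R) (rev [1..<Suc k])) Y I J
       = prod_list (map (\<lambda>x. R x (I ! k) (I ! k) x) (rev (take k I))) * Y (rotate_to_front k I) J"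
  using assms(1,2)
proof (induction k arbitrary: I)
  case 0
  hence "I \<noteq> []" using length_idxs by fastforce
  thus ?case by (simp add: rotate_to_front_0)
next
  case (Suc k)
  let ?I' = "swap_adj k I"
  have lenI: "Suc k < length I" using Suc.prems by (simp add: length_idxs)
  have swapped: "take k ?I' = take k I" "?I' ! k = I ! Suc k"
    using lenI by (simp_all add: swap_adj_def)
  have "foldr (tmul N m) (map (\<lambda>a. emb2 m a (a + 1) R) (rev [1..<Suc (Suc k)])) Y I J
      = R (I ! k) (I ! Suc k) (I ! Suc k) (I ! k)
        * foldr (tmul N m) (map (\<lambda>a. emb2 m a (a + 1) R) (rev [1..<Suc k])) Y ?I' J"
    using tmul_emb2_swap_left[OF Suc.prems R] by simp
  also have "\<dots> = R (I ! k) (I ! Suc k) (I ! Suc k) (I ! k)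
        * (prod_list (map (\<lambda>x. R x (I ! Suc k) (I ! Suc k) x) (rev (take k I)))
           * Y (rotate_to_front (Suc k) I) J)"
    using Suc.IH swap_adj_idxs Suc.prems
    by (simp add: swapped rotate_to_front_swap_adj[OF lenI])
  finally show ?case
    using lenI by (simp add: take_Suc_conv_app_nth mult.assoc)
qed

lemma foldr_tmul_emb1_tone:
  assumes "K \<in> idxs N m" and J: "J \<in> idxs N m" and "j \<le> m"
  shows "foldr (tmul N m) (map (\<lambda>a. emb1 m a A) [Suc j..<Suc m]) tone K J
       = (if take j K = take j J then prod_list (map (\<lambda>b. A (K ! b) (J ! b)) [j..<m]) else 0)"
  using assms(1,3)
proof (induction "m - j" arbitrary: j K)
  case 0
  thus ?case using J by (simp add: tone_def length_idxs)
next
  case (Suc d)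
  let ?F = "foldr (tmul N m) (map (\<lambda>a. emb1 m a A) [Suc (Suc j)..<Suc m]) tone"
  let ?P = "prod_list (map (\<lambda>b. A (K ! b) (J ! b)) [Suc j..<m])"
  have j: "j < m" using Suc.hyps by simp
  have lengths: "length K = m" "length J = m" using Suc.prems J by (auto simp: length_idxs)
  have upd: "?F (K[j := x]) J = (if take j K = take j J \<and> x = J ! j then ?P else 0)" if "x < N" for x
  proof -
    have IH: "?F (K[j := x]) J = (if take (Suc j) (K[j := x]) = take (Suc j) J
        then prod_list (map (\<lambda>b. A (K[j := x] ! b) (J ! b)) [Suc j..<m]) else 0)"
      using Suc.hyps j list_update_idxs[OF Suc.prems(1) that] by (intro Suc.hyps(1)) auto
    have takes: "take (Suc j) (K[j := x]) = take j K @ [x]" "take (Suc j) J = take j J @ [J ! j]"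
      using lengths j by (simp_all add: take_Suc_conv_app_nth take_update_cancel)
    have prods: "map (\<lambda>b. A (K[j := x] ! b) (J ! b)) [Suc j..<m] = map (\<lambda>b. A (K ! b) (J ! b)) [Suc j..<m]"
      by simp
    show ?thesis unfolding IH takes prods by auto
  qed
  have "foldr (tmul N m) (map (\<lambda>a. emb1 m a A) [Suc j..<Suc m]) tone K J
      = (\<Sum>x<N. A (K ! j) x * ?F (K[j := x]) J)"
    using j unfolding upt_conv_Cons[of "Suc j" "Suc m", OF Suc_mono[OF j]] list.map foldr_Cons o_apply
    by (intro tmul_emb1_left[OF Suc.prems(1)]) simp
  also have "\<dots> = (\<Sum>x<N. if x = J ! j then (if take j K = take j J then A (K ! j) (J ! j) * ?P else 0) else 0)"
    by (intro sum.cong refl) (auto simp: upd simp del: upt_Suc)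
  also have "\<dots> = (if take j K = take j J then prod_list (map (\<lambda>b. A (K ! b) (J ! b)) [j..<m]) else 0)"
    using nth_idxs_less[OF J j] j by (simp add: upt_conv_Cons)
  finally show ?case .
qed

section \<open>Path weights and matrix powers\<close>

fun path_weight :: "(nat \<Rightarrow> nat \<Rightarrow> 'a::monoid_mult) \<Rightarrow> nat \<Rightarrow> nat list \<Rightarrow> 'a" where
  "path_weight F u [] = 1"
| "path_weight F u (x # xs) = F u x * path_weight F x xs"

lemma path_weight_conv_nth:
  "path_weight F u xs = prod_list (map (\<lambda>b. F ((u # xs) ! b) (xs ! b)) [0..<length xs])"
proof (induction xs arbitrary: u)
  case (Cons x xs)
  have "[0..<length (x # xs)] = 0 # map Suc [0..<length xs]"
    by (simp only: length_Cons upt_conv_Cons[OF zero_less_Suc] map_Suc_upt)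
  thus ?case using Cons by (simp add: comp_def)
qed simp

fun mat_pow :: "nat \<Rightarrow> (nat \<Rightarrow> nat \<Rightarrow> 'a::semiring_1) \<Rightarrow> nat \<Rightarrow> nat \<Rightarrow> nat \<Rightarrow> 'a" where
  "mat_pow N F 0 u v = (if u = v then 1 else 0)"
| "mat_pow N F (Suc n) u v = (\<Sum>x<N. F u x * mat_pow N F n x v)"

lemma mat_pow_eq_sum_paths:
  "mat_pow N F n u v = (\<Sum>xs\<in>idxs N n. if last (u # xs) = v then path_weight F u xs else 0)"
proof (induction n arbitrary: u)
  case 0
  have "idxs N 0 = {[]}" by (auto simp: idxs_def)
  thus ?case by simp
next
  case (Suc n)
  have "inj_on (\<lambda>(x, xs). x # xs) ({..<N} \<times> idxs N n)" by (auto simp: inj_on_def)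
  hence "(\<Sum>xs\<in>idxs N (Suc n). if last (u # xs) = v then path_weight F u xs else 0)
      = (\<Sum>(x, xs)\<in>{..<N} \<times> idxs N n. F u x * (if last (x # xs) = v then path_weight F x xs else 0))"
    unfolding idxs_Suc by (subst sum.reindex) (auto intro: sum.cong)
  also have "\<dots> = (\<Sum>x<N. F u x * mat_pow N F n x v)"
    by (simp add: sum.cartesian_product[symmetric] Suc sum_distrib_left)
  finally show ?case by simp
qed

lemma sum_closed_paths:
  assumes "1 \<le> n"
  shows "(\<Sum>I\<in>idxs N n. path_weight (G (last I)) (last I) I) = (\<Sum>v<N. mat_pow N (G v) n v v)"
proof -
  have last_I: "I \<noteq> [] \<and> last I < N" if "I \<in> idxs N n" for I
  proof -
    have "I \<noteq> []" using that assms by (auto simp: idxs_def)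
    thus ?thesis using that last_in_set by (auto simp: idxs_def)
  qed
  have "(\<Sum>v<N. mat_pow N (G v) n v v)
      = (\<Sum>v<N. \<Sum>I\<in>idxs N n. if last I = v then path_weight (G v) v I else 0)"
    unfolding mat_pow_eq_sum_paths using last_I by (intro sum.cong refl) auto
  also have "\<dots> = (\<Sum>I\<in>idxs N n. \<Sum>v<N. if last I = v then path_weight (G v) v I else 0)"
    by (rule sum.swap)
  also have "\<dots> = (\<Sum>I\<in>idxs N n. path_weight (G (last I)) (last I) I)"
    using last_I by (intro sum.cong refl) simp
  finally show ?thesis ..
qed

section \<open>Central elements and geometric series\<close>

definition central :: "'a::semigroup_mult \<Rightarrow> bool" where
  "central x \<longleftrightarrow> (\<forall>y. x * y = y * x)"

lemma central_prod_list:
  "(\<And>x. x \<in> set xs \<Longrightarrow> central x) \<Longrightarrow> central (prod_list (xs :: 'a::monoid_mult list))"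
  by (induction xs) (auto simp: central_def, metis mult.assoc)

lemma prod_list_rev_central:
  "(\<And>x. x \<in> set xs \<Longrightarrow> central x) \<Longrightarrow> prod_list (rev xs) = prod_list (xs :: 'a::monoid_mult list)"
proof (induction xs)
  case (Cons x xs)
  hence "prod_list (rev xs) = prod_list xs" and "central x" by auto
  thus ?case by (simp add: central_def)
qed simp

lemma path_weight_central_factor:
  assumes "\<And>x. central (c x)"
  shows "path_weight (\<lambda>x y. c x * F x y) u xs = prod_list (map c (butlast (u # xs))) * path_weight F u xs"
proof (induction xs arbitrary: u)
  case (Cons x xs)
  let ?C = "prod_list (map c (butlast (x # xs)))"
  have "central ?C"
    by (rule central_prod_list) (auto simp: assms)
  hence "c u * F u x * (?C * path_weight F x xs) = c u * (?C * F u x) * path_weight F x xs"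
    by (simp add: central_def mult.assoc)
  thus ?case using Cons by (simp add: mult.assoc)
qed simp

definition geom_fps :: "'a::ring_1 \<Rightarrow> 'a fps" where
  "geom_fps c = Abs_fps (\<lambda>n. c ^ n)"

lemma Tser_swap_entry_eq_geom_fps: "Tser x v v x = geom_fps (of_int (sgn (int v - int x)))"
  by (rule fps_ext) (auto simp: Tser_def geom_fps_def fps_one_nth power_0_left)

lemma central_geom_fps_of_int: "central (geom_fps (of_int z) :: 'a::ring_1 fps)"
  unfolding central_def
proof (intro allI fps_ext)
  fix g :: "'a fps" and n
  have "fps_nth (geom_fps (of_int z) * g) n = (\<Sum>i=0..n. of_int (z ^ i) * fps_nth g (n - i))"
    by (simp add: fps_mult_nth geom_fps_def)
  also have "\<dots> = (\<Sum>i=0..n. fps_nth g (n - i) * of_int (z ^ (n - (n - i))))"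
    by (intro sum.cong refl) (simp add: mult_of_int_commute flip: of_int_power)
  also have "\<dots> = (\<Sum>i=0..n. fps_nth g i * of_int (z ^ (n - i)))"
    by (subst sum.atLeastAtMost_rev[of "\<lambda>i. fps_nth g i * of_int (z ^ (n - i))" 0 n])
       (intro sum.cong refl, simp)
  also have "\<dots> = fps_nth (g * geom_fps (of_int z)) n"
    by (simp add: fps_mult_nth geom_fps_def)
  finally show "fps_nth (geom_fps (of_int z) * g) n = fps_nth (g * geom_fps (of_int z)) n" .
qed

lemma geom_fps_mult_nth_0: "fps_nth (geom_fps c * G) 0 = fps_nth G 0"
  by (simp add: fps_mult_nth geom_fps_def)

lemma geom_fps_mult_nth_Suc:
  "fps_nth (geom_fps c * G) (Suc k) = fps_nth G (Suc k) + c * fps_nth (geom_fps c * G) k"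
proof -
  have "fps_nth (geom_fps c * G) (Suc k) = (\<Sum>i=0..Suc k. c ^ i * fps_nth G (Suc k - i))"
    by (simp add: fps_mult_nth geom_fps_def)
  also have "\<dots> = fps_nth G (Suc k) + c * (\<Sum>i=0..k. c ^ i * fps_nth G (k - i))"
    by (subst sum.atLeast0_atMost_Suc_shift) (simp add: sum_distrib_left mult.assoc)
  also have "(\<Sum>i=0..k. c ^ i * fps_nth G (k - i)) = fps_nth (geom_fps c * G) k"
    by (simp add: fps_mult_nth geom_fps_def)
  finally show ?thesis .
qed

definition geom_scaled :: "(nat \<Rightarrow> int) \<Rightarrow> (nat \<Rightarrow> nat \<Rightarrow> 'a::ring_1) \<Rightarrow> nat \<Rightarrow> nat \<Rightarrow> 'a fps" where
  "geom_scaled d L x y = geom_fps (of_int (d x)) * fps_const (L x y)"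

definition diag_shift :: "(nat \<Rightarrow> int) \<Rightarrow> (nat \<Rightarrow> nat \<Rightarrow> 'a::ring_1) \<Rightarrow> nat \<Rightarrow> nat \<Rightarrow> 'a" where
  "diag_shift d L x y = L x y + (if x = y then of_int (d x) else 0)"

lemma mat_pow_geom_scaled_Suc_nth:
  "fps_nth (mat_pow N (geom_scaled d L) (Suc s) u v) k
   = (\<Sum>x<N. L u x * fps_nth (mat_pow N (geom_scaled d L) s x v) k)
     + (if k = 0 then 0 else of_int (d u) * fps_nth (mat_pow N (geom_scaled d L) (Suc s) u v) (k - 1))"
proof -
  let ?G = "\<Sum>x<N. fps_const (L u x) * mat_pow N (geom_scaled d L) s x v"
  have pow: "mat_pow N (geom_scaled d L) (Suc s) u v = geom_fps (of_int (d u)) * ?G"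
    by (simp add: geom_scaled_def sum_distrib_left mult.assoc)
  have G: "fps_nth ?G k = (\<Sum>x<N. L u x * fps_nth (mat_pow N (geom_scaled d L) s x v) k)" for k
    by (simp add: fps_sum_nth)
  show ?thesis
    by (cases k) (simp_all only: pow geom_fps_mult_nth_0 geom_fps_mult_nth_Suc G, simp_all)
qed

text \<open>Column \<open>v\<close> of \<open>(1 - y(L + D))\<^sup>-\<^sup>1 = (1 - yGL)\<^sup>-\<^sup>1G\<close>, \<open>G = (1 - yD)\<^sup>-\<^sup>1\<close>, compared coefficientwise;
  \<open>G\<close> drops out because \<open>D\<close> vanishes at \<open>v\<close>.\<close>

lemma mat_pow_diag_shift_eq_coeffs:
  assumes dv: "d v = 0" and u: "u < N"
  shows "mat_pow N (diag_shift d L) n u v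
       = (\<Sum>s\<le>n. fps_nth (mat_pow N (geom_scaled d L) s u v) (n - s))"
  using u
proof (induction n arbitrary: u)
  case (Suc n)
  define D where "D s x k = fps_nth (mat_pow N (geom_scaled d L) s x v) k" for s x k
  have IH: "mat_pow N (diag_shift d L) n x v = (\<Sum>s\<le>n. D s x (n - s))" if "x < N" for x
    using Suc.IH that by (simp add: D_def)
  have D0: "of_int (d u) * D 0 u n = 0" and D0': "D 0 u (Suc n) = 0"
    using dv by (auto simp: D_def)
  have D_Suc: "D (Suc s) u (n - s) = (\<Sum>x<N. L u x * D s x (n - s))
      + (if s < n then of_int (d u) * D (Suc s) u (n - Suc s) else 0)" if "s \<le> n" for s
    using that mat_pow_geom_scaled_Suc_nth[of N d L s u v "n - s"] by (simp add: D_def Suc_diff_Suc)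
  have L_part: "(\<Sum>x<N. L u x * mat_pow N (diag_shift d L) n x v) = (\<Sum>s\<le>n. \<Sum>x<N. L u x * D s x (n - s))"
    by (simp add: IH sum_distrib_left sum.swap[of _ "{..<N}"])
  have d_part: "of_int (d u) * mat_pow N (diag_shift d L) n u v = (\<Sum>s<n. of_int (d u) * D (Suc s) u (n - Suc s))"
    using Suc.prems by (simp add: IH sum.atMost_shift distrib_left sum_distrib_left D0)
  have "mat_pow N (diag_shift d L) (Suc n) u v
      = (\<Sum>x<N. L u x * mat_pow N (diag_shift d L) n x v) + of_int (d u) * mat_pow N (diag_shift d L) n u v"
    using Suc.prems by (simp add: diag_shift_def distrib_right sum.distrib if_distrib[where f="\<lambda>c. c * _"] cong: if_cong)
  also have "\<dots> = (\<Sum>s\<le>n. \<Sum>x<N. L u x * D s x (n - s)) + (\<Sum>s\<le>n. if s < n then of_int (d u) * D (Suc s) u (n - Suc s) else 0)"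
    by (simp add: L_part d_part lessThan_Suc_atMost[symmetric] sum.lessThan_Suc)
  also have "\<dots> = (\<Sum>s\<le>n. D (Suc s) u (n - s))"
    by (simp add: D_Suc sum.distrib)
  also have "\<dots> = (\<Sum>s\<le>Suc n. D s u (Suc n - s))"
    unfolding sum.atMost_Suc_shift by (simp add: D0')
  finally show ?case by (simp add: D_def)
qed simp

section \<open>The generating series of \<open>\<theta>\<close>\<close>

lemma foldr_tmul_emb1_rotated_diag:
  assumes I: "I \<in> idxs N s" and s: "1 \<le> s"
  shows "foldr (tmul N s) (map (\<lambda>a. emb1 s a A) [Suc 0..<Suc s]) tone (rotate_to_front (s - 1) I) I
       = path_weight A (last I) I"
proof -
  have lenI: "length I = s" using I by (rule length_idxs)
  have "I ! (s - 1) = last I" using lenI s by (subst last_conv_nth) auto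
  hence rot: "rotate_to_front (s - 1) I ! b = (last I # I) ! b" if "b < s" for b
    using that s lenI by (subst nth_rotate_to_front) auto
  have R: "rotate_to_front (s - 1) I \<in> idxs N s"
    using I s by (intro rotate_to_front_idxs) auto
  show ?thesis
    unfolding foldr_tmul_emb1_tone[OF R I le0] path_weight_conv_nth lenI
    using rot by (auto intro: arg_cong[where f=prod_list])
qed

lemma Tser_off_swap: "k \<noteq> j \<or> l \<noteq> i \<Longrightarrow> Tser i j k l = 0"
  by (auto simp: Tser_def)

lemma theta_term_diag_entry:
  fixes L :: "nat \<Rightarrow> nat \<Rightarrow> 'a::ring_1"
  assumes I: "I \<in> idxs N s" and s: "1 \<le> s"
  shows "tprods N s (map (\<lambda>a. emb2 s a (a + 1) Tser) (rev [1..<s])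
            @ map (\<lambda>a. emb1 s a (\<lambda>i j. fps_const (L i j))) [1..<s + 1]) I I
       = path_weight (geom_scaled (\<lambda>x. sgn (int (last I) - int x)) L) (last I) I"
proof -
  define v where "v = last I"
  define c :: "nat \<Rightarrow> 'a fps" where "c = (\<lambda>x. Tser x v v x)"
  have lenI: "length I = s" using I by (rule length_idxs)
  have ne: "I \<noteq> []" using lenI s by auto
  have v: "I ! (s - 1) = v" using lenI ne s by (simp add: v_def last_conv_nth)
  have c_central: "central (c x)" for x
    unfolding c_def Tser_swap_entry_eq_geom_fps by (rule central_geom_fps_of_int)
  have "tprods N s (map (\<lambda>a. emb2 s a (a + 1) Tser) (rev [1..<s])
          @ map (\<lambda>a. emb1 s a (\<lambda>i j. fps_const (L i j))) [1..<s + 1]) I I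
      = foldr (tmul N s) (map (\<lambda>a. emb2 s a (a + 1) Tser) (rev [1..<Suc (s - 1)]))
          (foldr (tmul N s) (map (\<lambda>a. emb1 s a (\<lambda>i j. fps_const (L i j))) [Suc 0..<Suc s]) tone) I I"
    using s by (simp add: tprods_def)
  also have "\<dots> = prod_list (map c (rev (take (s - 1) I)))
      * foldr (tmul N s) (map (\<lambda>a. emb1 s a (\<lambda>i j. fps_const (L i j))) [Suc 0..<Suc s]) tone
          (rotate_to_front (s - 1) I) I"
    using s v by (subst foldr_tmul_emb2_swaps[OF I _ Tser_off_swap]) (simp_all add: c_def)
  also have "prod_list (map c (rev (take (s - 1) I))) = prod_list (map c (take (s - 1) I))"
    unfolding rev_map[symmetric] by (rule prod_list_rev_central) (auto simp: c_central)
  also have "\<dots> = prod_list (map c (v # butlast I))"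
    using lenI by (simp add: butlast_conv_take c_def Tser_def)
  also have "v # butlast I = butlast (v # I)"
    using ne by simp
  also have "foldr (tmul N s) (map (\<lambda>a. emb1 s a (\<lambda>i j. fps_const (L i j))) [Suc 0..<Suc s]) tone
          (rotate_to_front (s - 1) I) I
      = path_weight (\<lambda>i j. fps_const (L i j)) v I"
    unfolding v_def by (rule foldr_tmul_emb1_rotated_diag[OF I s])
  also have "prod_list (map c (butlast (v # I))) * path_weight (\<lambda>i j. fps_const (L i j)) v I
      = path_weight (geom_scaled (\<lambda>x. sgn (int v - int x)) L) v I"
  proof -
    have "geom_scaled (\<lambda>x. sgn (int v - int x)) L = (\<lambda>x y. c x * fps_const (L x y))"
      by (simp add: geom_scaled_def c_def Tser_swap_entry_eq_geom_fps fun_eq_iff)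
    thus ?thesis using path_weight_central_factor[of c, OF c_central] by simp
  qed
  finally show ?thesis by (simp add: v_def)
qed

lemma theta_term_eq_sum_mat_pow:
  assumes "1 \<le> s"
  shows "theta_term N L s = (\<Sum>v<N. mat_pow N (geom_scaled (\<lambda>x. sgn (int v - int x)) L) s v v)"
proof -
  have "theta_term N L s = (\<Sum>I\<in>idxs N s. path_weight (geom_scaled (\<lambda>x. sgn (int (last I) - int x)) L) (last I) I)"
    unfolding theta_term_def ttr_def by (intro sum.cong refl theta_term_diag_entry assms)
  also have "\<dots> = (\<Sum>v<N. mat_pow N (geom_scaled (\<lambda>x. sgn (int v - int x)) L) s v v)"
    by (rule sum_closed_paths[OF assms, where G="\<lambda>v. geom_scaled (\<lambda>x. sgn (int v - int x)) L"])
  finally show ?thesis .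
qed

section \<open>The trace of \<open>Mbar\<close>\<close>

lemma Mstep_entry:
  assumes I: "I \<in> idxs N m" and J: "J \<in> idxs N m" and a: "Suc a < m"
  shows "Mstep N L m (Suc a) X I J
       = of_int (sgn (int (I ! Suc a) - int (I ! a))) * X (swap_adj a I) J
         + (\<Sum>x<N. X (swap_adj a I) (J[a := x]) * L x (J ! a))"
proof -
  have Pop: "tmul N m (emb2 m (Suc a) (Suc a + 1) Pop) X I (J[a := x]) = X (swap_adj a I) (J[a := x])" for x
    by (subst tmul_emb2_swap_left[OF I a, where R = Pop]) (simp_all add: Pop_def)
  have Tcal: "tmul N m (emb2 m (Suc a) (Suc a + 1) Tcal) X I J
      = of_int (sgn (int (I ! Suc a) - int (I ! a))) * X (swap_adj a I) J"
    by (subst tmul_emb2_swap_left[OF I a, where R = Tcal]) (auto simp: Tcal_def)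
  show ?thesis
    unfolding Mstep_def tadd_def tmul_emb1_right[OF J less_imp_le[OF a]] Pop Tcal ..
qed

lemma drop_eq_iff_nth_drop_Suc:
  "a < length xs \<Longrightarrow> a < length ys \<Longrightarrow>
   drop a xs = drop a ys \<longleftrightarrow> xs ! a = ys ! a \<and> drop (Suc a) xs = drop (Suc a) ys"
  by (simp add: Cons_nth_drop_Suc[symmetric])

text \<open>With \<open>R = rotate_to_front a I\<close>, \<open>rot_entry L a R J\<close> is the \<open>(I, J)\<close> entry of the operator
  obtained after the first \<open>a\<close> steps of \<open>Mbar\<close>; note \<open>R ! 0 = I ! a\<close> and \<open>R ! Suc b = I ! b\<close> for \<open>b < a\<close>.\<close>

definition rot_factor :: "(nat \<Rightarrow> nat \<Rightarrow> 'a::ring_1) \<Rightarrow> nat list \<Rightarrow> nat list \<Rightarrow> nat \<Rightarrow> 'a" where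
  "rot_factor L R J b =
     L (R ! b) (J ! b) + (if R ! b = J ! b then of_int (sgn (int (R ! 0) - int (R ! Suc b))) else 0)"

definition rot_entry :: "(nat \<Rightarrow> nat \<Rightarrow> 'a::ring_1) \<Rightarrow> nat \<Rightarrow> nat list \<Rightarrow> nat list \<Rightarrow> 'a" where
  "rot_entry L a R J = (if drop a R = drop a J then (\<Prod>b\<leftarrow>[0..<a]. rot_factor L R J b) else 0)"

lemma sum_rot_entry_update:
  assumes "a < length R" "a < length J" "R ! a < N"
  shows "(\<Sum>x<N. rot_entry L a R (J[a := x]) * L x (J ! a))
       = (if drop (Suc a) R = drop (Suc a) J
          then (\<Prod>b\<leftarrow>[0..<a]. rot_factor L R J b) * L (R ! a) (J ! a) else 0)"
proof -
  have factors: "map (rot_factor L R (J[a := x])) [0..<a] = map (rot_factor L R J) [0..<a]" for x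
    by (intro map_cong refl) (simp add: rot_factor_def)
  have "rot_entry L a R (J[a := x])
      = (if x = R ! a \<and> drop (Suc a) R = drop (Suc a) J then (\<Prod>b\<leftarrow>[0..<a]. rot_factor L R J b) else 0)" for x
    unfolding rot_entry_def factors using assms by (auto simp: drop_eq_iff_nth_drop_Suc)
  thus ?thesis
    using assms(3) by (simp add: if_distrib[where f="\<lambda>c. c * _"] cong: if_cong)
qed

lemma rot_entry_Suc:
  assumes "Suc a < length R" "length J = length R" "R ! a < N"
  shows "of_int (sgn (int (R ! 0) - int (R ! Suc a))) * rot_entry L a R J
           + (\<Sum>x<N. rot_entry L a R (J[a := x]) * L x (J ! a))
       = rot_entry L (Suc a) R J"
proof -
  let ?C = "drop (Suc a) R = drop (Suc a) J"
  let ?P = "\<Prod>b\<leftarrow>[0..<a]. rot_factor L R J b"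
  have "rot_entry L a R J = (if ?C \<and> R ! a = J ! a then ?P else 0)"
    using assms by (auto simp: rot_entry_def drop_eq_iff_nth_drop_Suc)
  moreover have "rot_entry L (Suc a) R J = (if ?C then ?P * rot_factor L R J a else 0)"
    by (simp add: rot_entry_def)
  moreover have "rot_factor L R J a
      = L (R ! a) (J ! a) + (if R ! a = J ! a then of_int (sgn (int (R ! 0) - int (R ! Suc a))) else 0)"
    by (simp only: rot_factor_def)
  ultimately show ?thesis
    using assms by (auto simp: sum_rot_entry_update distrib_left mult_of_int_commute add.commute)
qed

lemma fold_Mstep_tone:
  assumes "a < m" "I \<in> idxs N m" "J \<in> idxs N m"
  shows "fold (Mstep N L m) [1..<Suc a] tone I J = rot_entry L a (rotate_to_front a I) J"
  using assms
proof (induction a arbitrary: I J)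
  case 0
  hence "I \<noteq> []" using length_idxs by fastforce
  thus ?case by (simp add: tone_def rot_entry_def rotate_to_front_0)
next
  case (Suc a)
  note I = Suc.prems(2) and J = Suc.prems(3)
  define R where "R = rotate_to_front (Suc a) I"
  have a: "Suc a < m" using Suc.prems by simp
  have lI: "length I = m" using I by (rule length_idxs)
  have R_swap: "rotate_to_front a (swap_adj a I) = R"
    using lI a by (simp add: R_def rotate_to_front_swap_adj)
  have R0: "R ! 0 = I ! Suc a" and R_Suc: "R ! Suc a = I ! a"
    using lI a by (simp_all add: R_def nth_rotate_to_front)
  have R_idx: "R \<in> idxs N m" using rotate_to_front_idxs[OF I a] by (simp add: R_def)
  have IH: "fold (Mstep N L m) [1..<Suc a] tone (swap_adj a I) J' = rot_entry L a R J'"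
    if "J' \<in> idxs N m" for J'
    using Suc.IH[OF _ swap_adj_idxs[OF I a] that] a by (simp add: R_swap)
  have "fold (Mstep N L m) [1..<Suc (Suc a)] tone = Mstep N L m (Suc a) (fold (Mstep N L m) [1..<Suc a] tone)"
    by simp
  hence "fold (Mstep N L m) [1..<Suc (Suc a)] tone I J
      = of_int (sgn (int (R ! 0) - int (R ! Suc a))) * fold (Mstep N L m) [1..<Suc a] tone (swap_adj a I) J
        + (\<Sum>x<N. fold (Mstep N L m) [1..<Suc a] tone (swap_adj a I) (J[a := x]) * L x (J ! a))"
    unfolding R0 R_Suc by (simp only: Mstep_entry[OF I J a])
  also have "\<dots> = rot_entry L (Suc a) R J"
    using IH J list_update_idxs[OF J] length_idxs[OF J] length_idxs[OF R_idx] a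
      nth_idxs_less[OF R_idx, of a]
    by (simp add: rot_entry_Suc[symmetric] del: upt_Suc)
  finally show ?case by (simp add: R_def)
qed

lemma Mbar_diag_entry:
  assumes m: "1 \<le> m" and I: "I \<in> idxs N m"
  shows "Mbar N L m I I = path_weight (diag_shift (\<lambda>x. sgn (int (last I) - int x)) L) (last I) I"
proof -
  define a where "a = m - 1"
  define v where "v = last I"
  define R where "R = rotate_to_front a I"
  have ma: "m = Suc a" using m by (simp add: a_def)
  have I': "I \<in> idxs N (Suc a)" using I ma by simp
  have lI: "length I = Suc a" using I' by (rule length_idxs)
  have R_idx: "R \<in> idxs N (Suc a)" using rotate_to_front_idxs[OF I' lessI] by (simp add: R_def)
  have v: "I ! a = v" unfolding v_def using lI by (subst last_conv_nth) auto
  have R: "R ! b = (v # I) ! b" if "b \<le> a" for b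
    using that lI v by (simp add: R_def nth_rotate_to_front)
  have "Mbar N L m I I = (\<Sum>x<N. fold (Mstep N L m) [1..<Suc a] tone I (I[a := x]) * L x (I ! a))"
    unfolding Mbar_def ma by (rule tmul_emb1_right[OF I' le_refl])
  also have "\<dots> = (\<Sum>x<N. rot_entry L a R (I[a := x]) * L x (I ! a))"
  proof (intro sum.cong refl)
    fix x assume "x \<in> {..<N}"
    thus "fold (Mstep N L m) [1..<Suc a] tone I (I[a := x]) * L x (I ! a) = rot_entry L a R (I[a := x]) * L x (I ! a)"
      unfolding R_def ma by (subst fold_Mstep_tone[OF lessI I' list_update_idxs[OF I']]) simp_all
  qed
  also have "\<dots> = (\<Prod>b\<leftarrow>[0..<a]. rot_factor L R I b) * L (R ! a) (I ! a)"
    using lI length_idxs[OF R_idx] nth_idxs_less[OF R_idx lessI] by (simp add: sum_rot_entry_update)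
  also have "\<dots> = path_weight (diag_shift (\<lambda>x. sgn (int v - int x)) L) v I"
  proof -
    have init: "map (rot_factor L R I) [0..<a]
        = map (\<lambda>b. diag_shift (\<lambda>x. sgn (int v - int x)) L ((v # I) ! b) (I ! b)) [0..<a]"
      using R by (intro map_cong refl) (simp add: diag_shift_def rot_factor_def)
    have last: "L (R ! a) (I ! a) = diag_shift (\<lambda>x. sgn (int v - int x)) L ((v # I) ! a) (I ! a)"
      using R[of a] v by (simp add: diag_shift_def)
    show ?thesis
      unfolding path_weight_conv_nth lI upt_Suc_append[OF le0] map_append prod_list.append init last
      by simp
  qed
  finally show ?thesis by (simp add: v_def)
qed

lemma trace_Mbar_eq_sum_mat_pow:
  assumes "1 \<le> m"
  shows "ttr N m (Mbar N L m) = (\<Sum>v<N. mat_pow N (diag_shift (\<lambda>x. sgn (int v - int x)) L) m v v)"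
proof -
  have "ttr N m (Mbar N L m) = (\<Sum>I\<in>idxs N m. path_weight (diag_shift (\<lambda>x. sgn (int (last I) - int x)) L) (last I) I)"
    unfolding ttr_def by (intro sum.cong refl Mbar_diag_entry[OF assms])
  also have "\<dots> = (\<Sum>v<N. mat_pow N (diag_shift (\<lambda>x. sgn (int v - int x)) L) m v v)"
    by (rule sum_closed_paths[OF assms, where G="\<lambda>v. diag_shift (\<lambda>x. sgn (int v - int x)) L"])
  finally show ?thesis .
qed

lemma theta_eq_sum_coeffs:
  assumes "1 \<le> m"
  shows "theta N L m = (\<Sum>v<N. \<Sum>s\<le>m.
           fps_nth (mat_pow N (geom_scaled (\<lambda>x. sgn (int v - int x)) L) s v v) (m - s))"
proof -
  have "theta N L m = (\<Sum>s = 1..m. fps_nth (theta_term N L s) (m - s))"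
    unfolding theta_def fps_sum_nth by (simp add: fps_X_power_mult_nth)
  also have "\<dots> = (\<Sum>s = 1..m. \<Sum>v<N.
      fps_nth (mat_pow N (geom_scaled (\<lambda>x. sgn (int v - int x)) L) s v v) (m - s))"
    by (intro sum.cong refl) (simp add: theta_term_eq_sum_mat_pow fps_sum_nth)
  also have "\<dots> = (\<Sum>v<N. \<Sum>s = 1..m.
      fps_nth (mat_pow N (geom_scaled (\<lambda>x. sgn (int v - int x)) L) s v v) (m - s))"
    by (rule sum.swap)
  also have "\<dots> = (\<Sum>v<N. \<Sum>s\<le>m.
      fps_nth (mat_pow N (geom_scaled (\<lambda>x. sgn (int v - int x)) L) s v v) (m - s))"
    using assms by (simp add: atMost_atLeast0 sum.atLeast_Suc_atMost)
  finally show ?thesis .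
qed

theorem mainTheorem6:
  fixes L :: "nat \<Rightarrow> nat \<Rightarrow> 'a::ring_1" and N m :: nat
  assumes "1 \<le> N" and "1 \<le> m"
  shows "theta N L m = ttr N m (Mbar N L m)"
proof -
  have "theta N L m = (\<Sum>v<N. \<Sum>s\<le>m.
          fps_nth (mat_pow N (geom_scaled (\<lambda>x. sgn (int v - int x)) L) s v v) (m - s))"
    using assms(2) by (rule theta_eq_sum_coeffs)
  also have "\<dots> = (\<Sum>v<N. mat_pow N (diag_shift (\<lambda>x. sgn (int v - int x)) L) m v v)"
    by (intro sum.cong refl mat_pow_diag_shift_eq_coeffs[symmetric]) simp_all
  also have "\<dots> = ttr N m (Mbar N L m)"
    using assms(2) by (rule trace_Mbar_eq_sum_mat_pow[symmetric])
  finally show ?thesis .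
qed

end
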